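(* Let $N\ge 2k$ be integers with $k\in\{1,2,3,4\}$, let $h>0$, $\alpha_1,\alpha_2,\alpha_3\in\mathbb{R}$, and let $\mathcal{D}_1,\mathcal{D}_2,\mathcal{D}_3\in\mathbb{C}^{N^3\times N^3}$ be as defined in the context. Define the block matrices $$\mathcal{CURL}_{\vec{\mathrm{k}}}=\begin{pmatrix}0&-\mathcal{D}_3&\mathcal{D}_2\\ \mathcal{D}_3&0&-\mathcal{D}_1\\ -\mathcal{D}_2&\mathcal{D}_1&0\end{pmatrix},\qquad \mathcal{DIV}_{\vec{\mathrm{k}}}=\begin{pmatrix}\mathcal{D}_1&\mathcal{D}_2&\mathcal{D}_3\end{pmatrix},$$ and $$\vec L_{\vec{\mathrm{k}}}:=\mathcal{CURL}_{\vec{\mathrm{k}}}\mathcal{CURL}_{\vec{\mathrm{k}}}'+\mathcal{DIV}_{\vec{\mathrm{k}}}'\mathcal{DIV}_{\vec{\mathrm{k}}},\qquad L_{\vec{\mathrm{k}}}:=\mathcal{DIV}_{\vec{\mathrm{k}}}\mathcal{DIV}_{\vec{\mathrm{k}}}'.$$ Then $\vec L_{\vec{\mathrm{k}}}=\mathrm{diag}(L_{\vec{\mathrm{k}}},L_{\vec{\mathrm{k}}},L_{\vec{\mathrm{k}}})$ (block diagonal).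
   Context: $X'$ denotes conjugate transpose, $I_N$ the $N\times N$ identity, $\otimes$ the Kronecker product, $\mathrm{i}=\sqrt{-1}$. For $\vec a\in\mathbb{R}^N$, $\mathrm{Circ}(\vec a)$ is the circulant matrix with $\mathrm{Circ}(\vec a)_{ij}=a_{((j-i)\bmod N)+1}$. Let $\mathbb{D}_1=\mathrm{Circ}(\vec v_1)$, $\mathbb{D}_0=\mathrm{Circ}(\vec v_0)$ with $\vec v_1=(-c_1,c_1,c_2,\dots,c_k,0,\dots,0,-c_k,\dots,-c_2)^T$, $\vec v_0=(d_1,d_1,d_2,\dots,d_k,0,\dots,0,d_k,\dots,d_2)^T\in\mathbb{R}^N$, where: $k=1$: $c_1=1$, $d_1=1/2$; $k=2$: $(c_1,c_2)=(9/8,-1/24)$, $(d_1,d_2)=(9/16,-1/16)$; $k=3$: $(c_1,c_2,c_3)=(25/64,-25/384,3/640)$, $(d_1,d_2,d_3)=(75/128,-25/256,3/256)$; $k=4$: $(c_1,\dots,c_4)=(1225/1024,-245/3072,49/5120,-5/7168)$, $(d_1,\dots,d_4)=(1225/2048,-245/2048,49/2048,-5/2048)$. Set $K_1=I_N\otimes I_N\otimes(\mathbb{D}_1/h)$, $K_2=I_N\otimes(\mathbb{D}_1/h)\otimes I_N$, $K_3=(\mathbb{D}_1/h)\otimes I_N\otimes I_N$, $L_1=I_N\otimes I_N\otimes(\alpha_1\mathbb{D}_0)$, $L_2=I_N\otimes(\alpha_2\mathbb{D}_0)\otimes I_N$, $L_3=(\alpha_3\mathbb{D}_0)\otimes I_N\otimes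 I_N$, and $\mathcal{D}_i=K_i+\mathrm{i}L_i$. *)

theory Defs
  imports "Jordan_Normal_Form.Schur_Decomposition"
begin

definition kron :: "'a :: times mat \<Rightarrow> 'a mat \<Rightarrow> 'a mat" where
  "kron A B = mat (dim_row A * dim_row B) (dim_col A * dim_col B)
     (\<lambda>(i,j). A $$ (i div dim_row B, j div dim_col B) * B $$ (i mod dim_row B, j mod dim_col B))"

definition circ :: "nat \<Rightarrow> (nat \<Rightarrow> complex) \<Rightarrow> complex mat" where
  "circ N a = mat N N (\<lambda>(i,j). a ((j + N - i) mod N))"

definition cs :: "nat \<Rightarrow> real list" where
  "cs k = (if k = 1 then [1]
     else if k = 2 then [9/8, -1/24]
     else if k = 3 then [25/64, -25/384, 3/640]
     else [1225/1024, -245/3072, 49/5120, -5/7168])"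

definition ds :: "nat \<Rightarrow> real list" where
  "ds k = (if k = 1 then [1/2]
     else if k = 2 then [9/16, -1/16]
     else if k = 3 then [75/128, -25/256, 3/256]
     else [1225/2048, -245/2048, 49/2048, -5/2048])"

text \<open>The vectors v_1, v_0 (0-indexed, length N):
  v_1 = (-c1, c1, c2, ..., ck, 0, ..., 0, -ck, ..., -c2),
  v_0 = ( d1, d1, d2, ..., dk, 0, ..., 0,  dk, ...,  d2).\<close>
definition stencil_vec :: "nat \<Rightarrow> nat \<Rightarrow> real list \<Rightarrow> real \<Rightarrow> real \<Rightarrow> nat \<Rightarrow> complex" where
  "stencil_vec N k a x0 s j =
     complex_of_real (if j = 0 then x0
      else if j \<le> k then a ! (j - 1)
      else if N - k + 1 \<le> j \<and> j \<le> N - 1 then s * a ! (N - j)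
      else 0)"

definition v1 :: "nat \<Rightarrow> nat \<Rightarrow> nat \<Rightarrow> complex" where
  "v1 N k = stencil_vec N k (cs k) (- (cs k ! 0)) (-1)"

definition v0 :: "nat \<Rightarrow> nat \<Rightarrow> nat \<Rightarrow> complex" where
  "v0 N k = stencil_vec N k (ds k) (ds k ! 0) 1"

definition DD1 :: "nat \<Rightarrow> nat \<Rightarrow> complex mat" where "DD1 N k = circ N (v1 N k)"
definition DD0 :: "nat \<Rightarrow> nat \<Rightarrow> complex mat" where "DD0 N k = circ N (v0 N k)"

definition Dop :: "nat \<Rightarrow> nat \<Rightarrow> real \<Rightarrow> real \<Rightarrow> real \<Rightarrow> real \<Rightarrow> nat \<Rightarrow> complex mat" where
  "Dop N k h a1 a2 a3 i =
    (let I = (1\<^sub>m N :: complex mat);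
         A = (complex_of_real (1 / h)) \<cdot>\<^sub>m DD1 N k;
         B = (\<lambda>a. complex_of_real a \<cdot>\<^sub>m DD0 N k)
     in if i = 1 then kron I (kron I A) + \<i> \<cdot>\<^sub>m kron I (kron I (B a1))
        else if i = 2 then kron I (kron A I) + \<i> \<cdot>\<^sub>m kron I (kron (B a2) I)
        else kron A (kron I I) + \<i> \<cdot>\<^sub>m kron (B a3) (kron I I))"

definition block_mat :: "nat \<Rightarrow> nat \<Rightarrow> nat \<Rightarrow> nat \<Rightarrow> 'a mat list list \<Rightarrow> 'a mat" where
  "block_mat r c n m Bs = mat (r * n) (c * m)
     (\<lambda>(i,j). (Bs ! (i div n) ! (j div m)) $$ (i mod n, j mod m))"

end

theory Submission
  imports Defs
begin

text \<open>
  Each \<open>D\<^sub>i\<close> is a Kronecker product of three circulant \<open>N \<times> N\<close> matrices, since the identity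
  and the one-dimensional stencil \<open>D\<^sub>1/h + i \<alpha> D\<^sub>0\<close> are circulant. Circulant matrices of one
  size commute (their product is a cyclic convolution) and the adjoint of a circulant matrix is
  circulant, so the mixed-product rule gives \<open>D\<^sub>a\<^sup>* D\<^sub>b = D\<^sub>b D\<^sub>a\<^sup>*\<close> for all \<open>a, b\<close>.
  Multiplying out the blocks, the diagonal blocks of \<open>CURL CURL\<^sup>* + DIV\<^sup>* DIV\<close> are
  \<open>D\<^sub>1 D\<^sub>1\<^sup>* + D\<^sub>2 D\<^sub>2\<^sup>* + D\<^sub>3 D\<^sub>3\<^sup>* = L\<close> and the off-diagonal blocks are
  \<open>\<plusminus>(D\<^sub>a\<^sup>* D\<^sub>b - D\<^sub>b D\<^sub>a\<^sup>*) = 0\<close>. Nothing else about the stencils is used.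
\<close>

lemma dim_row_mat_adjoint [simp]: "dim_row (mat_adjoint A) = dim_col A"
  and dim_col_mat_adjoint [simp]: "dim_col (mat_adjoint A) = dim_row A"
  unfolding mat_adjoint_def by auto

lemma index_mat_adjoint [simp]:
  "i < dim_col A \<Longrightarrow> j < dim_row A \<Longrightarrow> mat_adjoint (A :: complex mat) $$ (i, j) = cnj (A $$ (j, i))"
  unfolding mat_adjoint_def by (auto simp: mat_of_rows_index)

lemma mat_adjoint_carrier [simp]: "A \<in> carrier_mat n m \<Longrightarrow> mat_adjoint A \<in> carrier_mat m n"
  by (intro carrier_matI) (auto dest: carrier_matD)

lemma mat_adjoint_zero [simp]: "mat_adjoint (0\<^sub>m n m :: complex mat) = 0\<^sub>m m n"
  by (rule eq_matI) auto

lemma mat_adjoint_uminus [simp]: "mat_adjoint (- A :: complex mat) = - mat_adjoint A"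
  by (rule eq_matI) auto

lemma mult_add_less_mult:
  assumes "a < r" "x < n"
  shows "a * n + x < r * (n :: nat)"
proof -
  have "a * n + x < Suc a * n"
    using assms(2) by simp
  also have "\<dots> \<le> r * n"
    using assms(1) by (intro mult_le_mono1) simp
  finally show ?thesis .
qed

lemma sum_lessThan_mult: "(\<Sum>i < m * n. f i) = (\<Sum>a < m. \<Sum>x < n. f (a * n + x :: nat))"
proof -
  have "(\<Sum>i < m * n. f i) = (\<Sum>a < m. sum f {a * n ..< a * n + n})"
    by (simp add: sum.nat_group)
  also have "\<dots> = (\<Sum>a < m. \<Sum>x < n. f (a * n + x))"
    by (simp add: sum.shift_bounds_nat_ivl[of f 0 "a * n" n for a, simplified] atLeast0LessThan add.commute)
  finally show ?thesis .
qed

lemma dim_row_block_mat [simp]: "dim_row (block_mat r c n m Bs) = r * n"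
  and dim_col_block_mat [simp]: "dim_col (block_mat r c n m Bs) = c * m"
  unfolding block_mat_def by auto

lemma index_block_mat:
  assumes "a < r" "b < c" "x < n" "y < m"
  shows "block_mat r c n m Bs $$ (a * n + x, b * m + y) = Bs ! a ! b $$ (x, y)"
  using assms mult_add_less_mult[of a r x n] mult_add_less_mult[of b c y m]
  unfolding block_mat_def by simp

lemma eq_mat_block_coordsI:
  assumes "dim_row A = r * n" "dim_col A = c * m" "dim_row B = r * n" "dim_col B = c * m"
    and "\<And>a b x y. a < r \<Longrightarrow> b < c \<Longrightarrow> x < n \<Longrightarrow> y < m \<Longrightarrow>
      A $$ (a * n + x, b * m + y) = B $$ (a * n + x, b * m + y)"
  shows "A = B"
proof (rule eq_matI)
  fix i j assume "i < dim_row B" "j < dim_col B"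
  with assms(3,4) have "i < r * n" "j < c * m" by auto
  then have "i div n < r" "j div m < c" "i mod n < n" "j mod m < m"
    by (auto simp: less_mult_imp_div_less intro!: mod_less_divisor Nat.gr0I)
  with assms(5) have "A $$ (i div n * n + i mod n, j div m * m + j mod m)
    = B $$ (i div n * n + i mod n, j div m * m + j mod m)"
    by blast
  then show "A $$ (i, j) = B $$ (i, j)"
    by simp
qed (use assms(1-4) in auto)

lemma mat_adjoint_block_mat:
  assumes "\<And>a b. a < r \<Longrightarrow> b < c \<Longrightarrow> Bs ! a ! b \<in> carrier_mat n m"
  shows "mat_adjoint (block_mat r c n m Bs :: complex mat)
    = block_mat c r m n (map (\<lambda>b. map (\<lambda>a. mat_adjoint (Bs ! a ! b)) [0..<r]) [0..<c])"
proof (rule eq_mat_block_coordsI[where r = c and n = m and c = r and m = n])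
  fix b a y x assume ba: "b < c" "a < r" and yx: "y < m" "x < n"
  then have "dim_row (Bs ! a ! b) = n" "dim_col (Bs ! a ! b) = m"
    using assms by auto
  with ba yx show "mat_adjoint (block_mat r c n m Bs) $$ (b * m + y, a * n + x)
    = block_mat c r m n (map (\<lambda>b. map (\<lambda>a. mat_adjoint (Bs ! a ! b)) [0..<r]) [0..<c]) $$ (b * m + y, a * n + x)"
    using mult_add_less_mult[of a r x n] mult_add_less_mult[of b c y m]
    by (simp add: index_block_mat)
qed simp_all

lemma index_mult_block_mat:
  assumes "\<And>q. q < c \<Longrightarrow> Bs ! a ! q \<in> carrier_mat n m"
    and "\<And>q. q < c \<Longrightarrow> Cs ! q ! b \<in> carrier_mat m p"
    and "a < r" "b < s" "x < n" "y < p"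
  shows "(block_mat r c n m Bs * block_mat c s m p Cs) $$ (a * n + x, b * p + y)
    = (\<Sum>q < c. (Bs ! a ! q * Cs ! q ! b) $$ (x, y))"
proof -
  have "(block_mat r c n m Bs * block_mat c s m p Cs) $$ (a * n + x, b * p + y)
      = (\<Sum>k < c * m. block_mat r c n m Bs $$ (a * n + x, k) * block_mat c s m p Cs $$ (k, b * p + y))"
    using assms(3-) mult_add_less_mult[of a r x n] mult_add_less_mult[of b s y p]
    by (simp add: scalar_prod_def atLeast0LessThan)
  also have "\<dots> = (\<Sum>q < c. \<Sum>l < m. Bs ! a ! q $$ (x, l) * Cs ! q ! b $$ (l, y))"
    using assms by (simp add: sum_lessThan_mult index_block_mat)
  also have "\<dots> = (\<Sum>q < c. (Bs ! a ! q * Cs ! q ! b) $$ (x, y))"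
  proof (rule sum.cong)
    fix q assume "q \<in> {..<c}"
    with assms(1,2) have "Bs ! a ! q \<in> carrier_mat n m" "Cs ! q ! b \<in> carrier_mat m p"
      by auto
    with assms(5,6) show "(\<Sum>l < m. Bs ! a ! q $$ (x, l) * Cs ! q ! b $$ (l, y)) = (Bs ! a ! q * Cs ! q ! b) $$ (x, y)"
      by (simp add: scalar_prod_def atLeast0LessThan)
  qed simp
  finally show ?thesis .
qed

lemma index_block_mat_mult_adjoint:
  assumes "\<And>q. q < c \<Longrightarrow> Bs ! a ! q \<in> carrier_mat n m"
    and "\<And>b q. b < s \<Longrightarrow> q < c \<Longrightarrow> Cs ! b ! q \<in> carrier_mat p m"
    and "a < r" "b < s" "x < n" "y < p"
  shows "(block_mat r c n m Bs * mat_adjoint (block_mat s c p m Cs :: complex mat)) $$ (a * n + x, b * p + y)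
    = (\<Sum>q < c. (Bs ! a ! q * mat_adjoint (Cs ! b ! q)) $$ (x, y))"
proof -
  let ?Cs' = "map (\<lambda>q. map (\<lambda>b. mat_adjoint (Cs ! b ! q)) [0..<s]) [0..<c]"
  have "mat_adjoint (block_mat s c p m Cs) = block_mat c s m p ?Cs'"
    using assms(2) by (rule mat_adjoint_block_mat)
  moreover have "?Cs' ! q ! b = mat_adjoint (Cs ! b ! q)" if "q < c" for q
    using that assms(4) by simp
  moreover have "(block_mat r c n m Bs * block_mat c s m p ?Cs') $$ (a * n + x, b * p + y)
      = (\<Sum>q < c. (Bs ! a ! q * ?Cs' ! q ! b) $$ (x, y))"
    using assms by (intro index_mult_block_mat) auto
  ultimately show ?thesis
    by simp
qed

lemma index_adjoint_block_mat_mult: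
  assumes "\<And>q a. q < r \<Longrightarrow> a < s \<Longrightarrow> Bs ! q ! a \<in> carrier_mat m n"
    and "\<And>q. q < r \<Longrightarrow> Cs ! q ! b \<in> carrier_mat m p"
    and "a < s" "b < t" "x < n" "y < p"
  shows "(mat_adjoint (block_mat r s m n Bs :: complex mat) * block_mat r t m p Cs) $$ (a * n + x, b * p + y)
    = (\<Sum>q < r. (mat_adjoint (Bs ! q ! a) * Cs ! q ! b) $$ (x, y))"
proof -
  let ?Bs' = "map (\<lambda>a. map (\<lambda>q. mat_adjoint (Bs ! q ! a)) [0..<r]) [0..<s]"
  have "mat_adjoint (block_mat r s m n Bs) = block_mat s r n m ?Bs'"
    using assms(1) by (rule mat_adjoint_block_mat)
  moreover have "?Bs' ! a ! q = mat_adjoint (Bs ! q ! a)" if "q < r" for q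
    using that assms(3) by simp
  moreover have "(block_mat s r n m ?Bs' * block_mat r t m p Cs) $$ (a * n + x, b * p + y)
      = (\<Sum>q < r. (?Bs' ! a ! q * Cs ! q ! b) $$ (x, y))"
    using assms by (intro index_mult_block_mat) auto
  ultimately show ?thesis
    by simp
qed

lemma circ_carrier [simp]: "circ N a \<in> carrier_mat N N"
  and dim_row_circ [simp]: "dim_row (circ N a) = N"
  and dim_col_circ [simp]: "dim_col (circ N a) = N"
  unfolding circ_def by auto

lemma index_circ [simp]: "i < N \<Longrightarrow> j < N \<Longrightarrow> circ N a $$ (i, j) = a ((j + N - i) mod N)"
  unfolding circ_def by auto

lemma circ_offset_eq_int_mod:
  assumes "i < N"
  shows "(j + N - i) mod N = nat ((int j - int i) mod int N)"
proof -
  have "int ((j + N - i) mod N) = (int j - int i + int N) mod int N"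
    using assms by (simp add: of_nat_mod of_nat_diff algebra_simps)
  then show ?thesis
    by simp
qed

lemma sum_lessThan_reflect_mod:
  fixes g :: "int \<Rightarrow> 'a :: comm_monoid_add"
  assumes "N > 0" "\<And>x. g (x mod int N) = g x"
  shows "(\<Sum>l < N. g (c - int l)) = (\<Sum>l < N. g (int l))"
proof -
  have inverse: "nat ((c - int (nat ((c - int l) mod int N))) mod int N) = l" if "l < N" for l
  proof -
    have "(c - (c - int l) mod int N) mod int N = (c - (c - int l)) mod int N"
      by (rule mod_diff_right_eq)
    with \<open>l < N\<close> \<open>N > 0\<close> show ?thesis
      by simp
  qed
  show ?thesis
    by (rule sum.reindex_bij_witness[where i = "\<lambda>l. nat ((c - int l) mod int N)" and j = "\<lambda>l. nat ((c - int l) mod int N)"])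
      (use assms inverse in \<open>auto simp: nat_less_iff\<close>)
qed

lemma index_mult_circ:
  assumes "i < N" "j < N"
  shows "(circ N a * circ N b) $$ (i, j)
    = (\<Sum>l < N. a (nat ((int l - int i) mod int N)) * b (nat ((int j - int l) mod int N)))"
  using assms by (simp add: scalar_prod_def atLeast0LessThan circ_offset_eq_int_mod)

lemma circ_mult_commute: "circ N a * circ N b = circ N b * circ N a"
proof (rule eq_matI)
  fix i j assume "i < dim_row (circ N b * circ N a)" "j < dim_col (circ N b * circ N a)"
  then have i: "i < N" and j: "j < N" by auto
  define g where "g x = a (nat ((x - int i) mod int N)) * b (nat ((int j - x) mod int N))" for x
  have "g (x mod int N) = g x" for x
    unfolding g_def by (simp add: mod_diff_left_eq mod_diff_right_eq)
  \<comment> \<open>substituting \<open>l \<mapsto> i + j - l\<close> modulo \<open>N\<close> swaps the two factors of the convolution\<close>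
  then have "(\<Sum>l < N. g (int i + int j - int l)) = (\<Sum>l < N. g (int l))"
    using i by (intro sum_lessThan_reflect_mod) auto
  then show "(circ N a * circ N b) $$ (i, j) = (circ N b * circ N a) $$ (i, j)"
    unfolding index_mult_circ[OF i j] g_def by (simp add: mult.commute)
qed auto

lemma mat_adjoint_circ: "mat_adjoint (circ N a) = circ N (\<lambda>d. cnj (a ((N - d) mod N)))"
proof (rule eq_matI)
  fix i j assume "i < dim_row (circ N (\<lambda>d. cnj (a ((N - d) mod N))))"
    "j < dim_col (circ N (\<lambda>d. cnj (a ((N - d) mod N))))"
  then have i: "i < N" and j: "j < N" by auto
  then have "(N - (j + N - i) mod N) mod N = (i + N - j) mod N"
    by (cases "i \<le> j") (auto simp: le_mod_geq mod_if)
  with i j show "mat_adjoint (circ N a) $$ (i, j) = circ N (\<lambda>d. cnj (a ((N - d) mod N))) $$ (i, j)"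
    by simp
qed auto

lemma circ_adjoint_commute: "mat_adjoint (circ N a) * circ N b = circ N b * mat_adjoint (circ N a)"
  unfolding mat_adjoint_circ by (rule circ_mult_commute)

lemma add_circ: "circ N a + circ N b = circ N (\<lambda>d. a d + b d)"
  by (rule eq_matI) auto

lemma smult_circ: "c \<cdot>\<^sub>m circ N a = circ N (\<lambda>d. c * a d)"
  by (rule eq_matI) auto

lemma one_mat_eq_circ: "1\<^sub>m N = circ N (\<lambda>d. if d = 0 then 1 else 0)"
proof (rule eq_matI)
  fix i j assume "i < dim_row (circ N (\<lambda>d. if d = 0 then 1 else 0))"
    "j < dim_col (circ N (\<lambda>d. if d = 0 then 1 else 0))"
  then have i: "i < N" and j: "j < N" by auto
  then have "((j + N - i) mod N = 0) = (i = j)"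
    by (cases "i \<le> j") (auto simp: le_mod_geq mod_if)
  with i j show "1\<^sub>m N $$ (i, j) = circ N (\<lambda>d. if d = 0 then 1 else 0) $$ (i, j)"
    by simp
qed auto

lemma dim_row_kron [simp]: "dim_row (kron A B) = dim_row A * dim_row B"
  and dim_col_kron [simp]: "dim_col (kron A B) = dim_col A * dim_col B"
  unfolding kron_def by auto

lemma index_kron:
  assumes "B \<in> carrier_mat n m" "a < dim_row A" "b < dim_col A" "x < n" "y < m"
  shows "kron A B $$ (a * n + x, b * m + y) = A $$ (a, b) * B $$ (x, y)"
proof -
  have "dim_row B = n" "dim_col B = m"
    using assms(1) by auto
  with assms(2-) show ?thesis
    using mult_add_less_mult[of a "dim_row A" x n] mult_add_less_mult[of b "dim_col A" y m]
    unfolding kron_def by simp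
qed

lemma kron_mult:
  fixes A B C D :: "'a :: comm_semiring_0 mat"
  assumes "dim_col A = dim_row C" "dim_col B = dim_row D"
  shows "kron A B * kron C D = kron (A * C) (B * D)"
proof (rule eq_mat_block_coordsI[where r = "dim_row A" and n = "dim_row B" and c = "dim_col C" and m = "dim_col D"])
  fix a b x y assume ab: "a < dim_row A" "b < dim_col C" and xy: "x < dim_row B" "y < dim_col D"
  have "(kron A B * kron C D) $$ (a * dim_row B + x, b * dim_col D + y)
      = (\<Sum>k < dim_col A * dim_col B.
          kron A B $$ (a * dim_row B + x, k) * kron C D $$ (k, b * dim_col D + y))"
    using assms ab xy mult_add_less_mult[of a "dim_row A" x] mult_add_less_mult[of b "dim_col C" y]
    by (simp add: scalar_prod_def atLeast0LessThan)
  also have "\<dots> = (\<Sum>q < dim_col A. \<Sum>l < dim_col B. (A $$ (a, q) * B $$ (x, l)) * (C $$ (q, b) * D $$ (l, y)))"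
    unfolding sum_lessThan_mult
  proof (intro sum.cong refl)
    fix q l assume ql: "q \<in> {..<dim_col A}" "l \<in> {..<dim_col B}"
    have "kron A B $$ (a * dim_row B + x, q * dim_col B + l) = A $$ (a, q) * B $$ (x, l)"
      by (rule index_kron) (use ab xy ql in auto)
    moreover have "kron C D $$ (q * dim_row D + l, b * dim_col D + y) = C $$ (q, b) * D $$ (l, y)"
      by (rule index_kron) (use assms ab xy ql in auto)
    ultimately show "kron A B $$ (a * dim_row B + x, q * dim_col B + l) * kron C D $$ (q * dim_col B + l, b * dim_col D + y)
      = (A $$ (a, q) * B $$ (x, l)) * (C $$ (q, b) * D $$ (l, y))"
      using assms(2) by simp
  qed
  also have "\<dots> = (\<Sum>q < dim_col A. A $$ (a, q) * C $$ (q, b)) * (\<Sum>l < dim_col B. B $$ (x, l) * D $$ (l, y))"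
    unfolding sum_product by (intro sum.cong refl) (simp add: ac_simps)
  also have "\<dots> = (A * C) $$ (a, b) * (B * D) $$ (x, y)"
    using assms ab xy by (simp add: scalar_prod_def atLeast0LessThan)
  also have "\<dots> = kron (A * C) (B * D) $$ (a * dim_row B + x, b * dim_col D + y)"
    by (rule index_kron[symmetric]) (use ab xy in auto)
  finally show "(kron A B * kron C D) $$ (a * dim_row B + x, b * dim_col D + y)
    = kron (A * C) (B * D) $$ (a * dim_row B + x, b * dim_col D + y)" .
qed simp_all

lemma mat_adjoint_kron: "mat_adjoint (kron A B) = kron (mat_adjoint A) (mat_adjoint (B :: complex mat))"
proof (rule eq_mat_block_coordsI[where r = "dim_col A" and n = "dim_col B" and c = "dim_row A" and m = "dim_row B"])
  fix b a y x assume "b < dim_col A" "a < dim_row A" "y < dim_col B" "x < dim_row B"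
  moreover have "kron A B $$ (a * dim_row B + x, b * dim_col B + y) = A $$ (a, b) * B $$ (x, y)"
    by (rule index_kron) (use calculation in auto)
  moreover have "kron (mat_adjoint A) (mat_adjoint B) $$ (b * dim_col B + y, a * dim_row B + x)
      = mat_adjoint A $$ (b, a) * mat_adjoint B $$ (y, x)"
    by (rule index_kron) (use calculation in auto)
  ultimately show "mat_adjoint (kron A B) $$ (b * dim_col B + y, a * dim_row B + x)
    = kron (mat_adjoint A) (mat_adjoint B) $$ (b * dim_col B + y, a * dim_row B + x)"
    using mult_add_less_mult[of a "dim_row A" x] mult_add_less_mult[of b "dim_col A" y]
    by simp
qed simp_all

lemma kron_add_right:
  assumes "B \<in> carrier_mat n m" "C \<in> carrier_mat n m"
  shows "kron A (B + C) = kron A B + kron A (C :: 'a :: semiring mat)"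
proof (rule eq_mat_block_coordsI[where r = "dim_row A" and n = n and c = "dim_col A" and m = m])
  fix a b x y assume "a < dim_row A" "b < dim_col A" "x < n" "y < m"
  moreover have "B + C \<in> carrier_mat n m"
    using assms by simp
  ultimately show "kron A (B + C) $$ (a * n + x, b * m + y) = (kron A B + kron A C) $$ (a * n + x, b * m + y)"
    using assms mult_add_less_mult[of a "dim_row A" x n] mult_add_less_mult[of b "dim_col A" y m]
    by (simp add: index_kron distrib_left)
qed (use assms in auto)

lemma kron_add_left:
  assumes "A \<in> carrier_mat n m" "B \<in> carrier_mat n m"
  shows "kron (A + B) C = kron A C + kron B (C :: 'a :: semiring mat)"
proof (rule eq_mat_block_coordsI[where r = n and n = "dim_row C" and c = m and m = "dim_col C"])
  fix a b x y assume "a < n" "b < m" "x < dim_row C" "y < dim_col C"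
  then show "kron (A + B) C $$ (a * dim_row C + x, b * dim_col C + y)
    = (kron A C + kron B C) $$ (a * dim_row C + x, b * dim_col C + y)"
    using assms mult_add_less_mult[of a n x "dim_row C"] mult_add_less_mult[of b m y "dim_col C"]
    by (simp add: index_kron distrib_right)
qed (use assms in auto)

lemma kron_smult_right: "kron A (c \<cdot>\<^sub>m B) = c \<cdot>\<^sub>m kron A (B :: 'a :: comm_semiring mat)"
proof (rule eq_mat_block_coordsI[where r = "dim_row A" and n = "dim_row B" and c = "dim_col A" and m = "dim_col B"])
  fix a b x y assume "a < dim_row A" "b < dim_col A" "x < dim_row B" "y < dim_col B"
  moreover have "c \<cdot>\<^sub>m B \<in> carrier_mat (dim_row B) (dim_col B)"
    by simp
  ultimately show "kron A (c \<cdot>\<^sub>m B) $$ (a * dim_row B + x, b * dim_col B + y)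
    = (c \<cdot>\<^sub>m kron A B) $$ (a * dim_row B + x, b * dim_col B + y)"
    using mult_add_less_mult[of a "dim_row A" x] mult_add_less_mult[of b "dim_col A" y]
    by (simp add: index_kron mult.left_commute)
qed simp_all

lemma kron_smult_left: "kron (c \<cdot>\<^sub>m A) B = c \<cdot>\<^sub>m kron A (B :: 'a :: comm_semiring mat)"
proof (rule eq_mat_block_coordsI[where r = "dim_row A" and n = "dim_row B" and c = "dim_col A" and m = "dim_col B"])
  fix a b x y assume "a < dim_row A" "b < dim_col A" "x < dim_row B" "y < dim_col B"
  then show "kron (c \<cdot>\<^sub>m A) B $$ (a * dim_row B + x, b * dim_col B + y)
    = (c \<cdot>\<^sub>m kron A B) $$ (a * dim_row B + x, b * dim_col B + y)"
    using mult_add_less_mult[of a "dim_row A" x] mult_add_less_mult[of b "dim_col A" y]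
    by (simp add: index_kron mult.assoc)
qed simp_all

lemma kron_carrier [simp]:
  "A \<in> carrier_mat n m \<Longrightarrow> B \<in> carrier_mat p q \<Longrightarrow> kron A B \<in> carrier_mat (n * p) (m * q)"
  by (auto intro!: carrier_matI)

lemma kron_adjoint_commute:
  assumes "A \<in> carrier_mat n n" "C \<in> carrier_mat n n" "B \<in> carrier_mat m m" "D \<in> carrier_mat m m"
    and "mat_adjoint A * C = C * mat_adjoint A" "mat_adjoint B * D = D * mat_adjoint (B :: complex mat)"
  shows "mat_adjoint (kron A B) * kron C D = kron C D * mat_adjoint (kron A B)"
  using assms by (simp add: mat_adjoint_kron kron_mult)

definition stencil_1d :: "nat \<Rightarrow> nat \<Rightarrow> real \<Rightarrow> real \<Rightarrow> complex mat" where
  "stencil_1d N k h \<alpha> = complex_of_real (1 / h) \<cdot>\<^sub>m DD1 N k + \<i> \<cdot>\<^sub>m (complex_of_real \<alpha> \<cdot>\<^sub>m DD0 N k)"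

lemma stencil_1d_eq_circ:
  "stencil_1d N k h \<alpha> = circ N (\<lambda>d. complex_of_real (1 / h) * v1 N k d + \<i> * (complex_of_real \<alpha> * v0 N k d))"
  unfolding stencil_1d_def DD1_def DD0_def by (simp add: smult_circ add_circ)

lemma Dop_eq_kron:
  "Dop N k h a1 a2 a3 1 = kron (1\<^sub>m N) (kron (1\<^sub>m N) (stencil_1d N k h a1))"
  "Dop N k h a1 a2 a3 2 = kron (1\<^sub>m N) (kron (stencil_1d N k h a2) (1\<^sub>m N))"
  "Dop N k h a1 a2 a3 3 = kron (stencil_1d N k h a3) (kron (1\<^sub>m N) (1\<^sub>m N))"
  unfolding Dop_def stencil_1d_def DD1_def DD0_def Let_def
  by (simp_all add: kron_add_left[where n = N and m = N] kron_add_right[where n = N and m = N]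
      kron_add_right[where n = "N * N" and m = "N * N"] kron_smult_left kron_smult_right)

lemma Dop_eq_kron_circ:
  assumes "i \<in> {1, 2, 3}"
  obtains a b c where "Dop N k h a1 a2 a3 i = kron (circ N a) (kron (circ N b) (circ N c))"
proof -
  from assms consider "i = 1" | "i = 2" | "i = 3"
    by blast
  then show ?thesis
  proof cases
    case 1
    show ?thesis
      using that unfolding 1 Dop_eq_kron stencil_1d_eq_circ one_mat_eq_circ by blast
  next
    case 2
    show ?thesis
      using that unfolding 2 Dop_eq_kron stencil_1d_eq_circ one_mat_eq_circ by blast
  next
    case 3
    show ?thesis
      using that unfolding 3 Dop_eq_kron stencil_1d_eq_circ one_mat_eq_circ by blast
  qed
qed

lemma Dop_carrier:
  assumes "i \<in> {1, 2, 3}"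
  shows "Dop N k h a1 a2 a3 i \<in> carrier_mat (N ^ 3) (N ^ 3)"
proof -
  obtain a b c where "Dop N k h a1 a2 a3 i = kron (circ N a) (kron (circ N b) (circ N c))"
    using Dop_eq_kron_circ[OF assms] .
  then show ?thesis
    by (auto intro!: carrier_matI simp: power3_eq_cube)
qed

lemma Dop_adjoint_commute:
  assumes "i \<in> {1, 2, 3}" "j \<in> {1, 2, 3}"
  shows "mat_adjoint (Dop N k h a1 a2 a3 i) * Dop N k h a1 a2 a3 j
    = Dop N k h a1 a2 a3 j * mat_adjoint (Dop N k h a1 a2 a3 i)"
proof -
  obtain a b c where i: "Dop N k h a1 a2 a3 i = kron (circ N a) (kron (circ N b) (circ N c))"
    using Dop_eq_kron_circ[OF assms(1)] .
  obtain a' b' c' where j: "Dop N k h a1 a2 a3 j = kron (circ N a') (kron (circ N b') (circ N c'))"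
    using Dop_eq_kron_circ[OF assms(2)] .
  show ?thesis
    unfolding i j
    by (intro kron_adjoint_commute[where n = N and m = "N * N"] kron_adjoint_commute[where n = N and m = N]
        circ_adjoint_commute) simp_all
qed

lemma block_row_mult_adjoint:
  assumes "D1 \<in> carrier_mat n m" "D2 \<in> carrier_mat n m" "D3 \<in> carrier_mat n m"
  shows "block_mat 1 3 n m [[D1, D2, D3]] * mat_adjoint (block_mat 1 3 n m [[D1, D2, D3]])
    = D1 * mat_adjoint D1 + D2 * mat_adjoint D2 + (D3 * mat_adjoint D3 :: complex mat)"
proof (rule eq_matI)
  fix x y assume "x < dim_row (D1 * mat_adjoint D1 + D2 * mat_adjoint D2 + D3 * mat_adjoint D3)"
    "y < dim_col (D1 * mat_adjoint D1 + D2 * mat_adjoint D2 + D3 * mat_adjoint D3)"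
  then have xy: "x < n" "y < n"
    using assms by auto
  have "(block_mat 1 3 n m [[D1, D2, D3]] * mat_adjoint (block_mat 1 3 n m [[D1, D2, D3]])) $$ (0 * n + x, 0 * n + y)
      = (\<Sum>q < 3. ([[D1, D2, D3]] ! 0 ! q * mat_adjoint ([[D1, D2, D3]] ! 0 ! q)) $$ (x, y))"
    using assms xy by (intro index_block_mat_mult_adjoint) (auto simp: less_Suc_eq numeral_3_eq_3)
  with assms xy show "(block_mat 1 3 n m [[D1, D2, D3]] * mat_adjoint (block_mat 1 3 n m [[D1, D2, D3]])) $$ (x, y)
    = (D1 * mat_adjoint D1 + D2 * mat_adjoint D2 + D3 * mat_adjoint D3) $$ (x, y)"
    by (simp add: numeral_3_eq_3)
qed (use assms in auto)

lemma curl_curl_adjoint_plus_div_adjoint_div: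
  fixes D1 D2 D3 :: "complex mat"
  assumes carrier: "D1 \<in> carrier_mat n n" "D2 \<in> carrier_mat n n" "D3 \<in> carrier_mat n n"
    and commute: "\<And>X Y. X \<in> {D1, D2, D3} \<Longrightarrow> Y \<in> {D1, D2, D3} \<Longrightarrow> mat_adjoint X * Y = Y * mat_adjoint X"
  defines "CURL \<equiv> block_mat 3 3 n n [[0\<^sub>m n n, - D3, D2], [D3, 0\<^sub>m n n, - D1], [- D2, D1, 0\<^sub>m n n]]"
  defines "DIV \<equiv> block_mat 1 3 n n [[D1, D2, D3]]"
  defines "L \<equiv> DIV * mat_adjoint DIV"
  shows "CURL * mat_adjoint CURL + mat_adjoint DIV * DIV
    = block_mat 3 3 n n [[L, 0\<^sub>m n n, 0\<^sub>m n n], [0\<^sub>m n n, L, 0\<^sub>m n n], [0\<^sub>m n n, 0\<^sub>m n n, L]]"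
proof (rule eq_mat_block_coordsI[where r = 3 and n = n and c = 3 and m = n])
  define Cs where "Cs = [[0\<^sub>m n n, - D3, D2], [D3, 0\<^sub>m n n, - D1], [- D2, D1, 0\<^sub>m n n]]"
  define Ds where "Ds = [[D1, D2, D3]]"
  have three: "a < 3 \<longleftrightarrow> a = 0 \<or> a = 1 \<or> a = (2 :: nat)" for a
    by auto
  have dims: "dim_row D1 = n" "dim_col D1 = n" "dim_row D2 = n" "dim_col D2 = n" "dim_row D3 = n" "dim_col D3 = n"
    using carrier by auto
  have L: "L = D1 * mat_adjoint D1 + D2 * mat_adjoint D2 + D3 * mat_adjoint D3"
    unfolding L_def DIV_def using carrier by (rule block_row_mult_adjoint)
  fix a b x y :: nat
  assume ab: "a < 3" "b < 3" and xy: "x < n" "y < n"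
  have "(CURL * mat_adjoint CURL + mat_adjoint DIV * DIV) $$ (a * n + x, b * n + y)
      = (CURL * mat_adjoint CURL) $$ (a * n + x, b * n + y) + (mat_adjoint DIV * DIV) $$ (a * n + x, b * n + y)"
    using mult_add_less_mult[OF ab(1) xy(1)] mult_add_less_mult[OF ab(2) xy(2)]
    by (intro index_add_mat) (simp_all add: CURL_def DIV_def)
  also have "(CURL * mat_adjoint CURL) $$ (a * n + x, b * n + y) = (\<Sum>q < 3. (Cs ! a ! q * mat_adjoint (Cs ! b ! q)) $$ (x, y))"
    unfolding CURL_def Cs_def[symmetric]
    by (rule index_block_mat_mult_adjoint) (use ab xy carrier in \<open>auto simp: Cs_def three\<close>)
  also have "(mat_adjoint DIV * DIV) $$ (a * n + x, b * n + y) = (\<Sum>q < 1. (mat_adjoint (Ds ! q ! a) * Ds ! q ! b) $$ (x, y))"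
    unfolding DIV_def Ds_def[symmetric]
    by (rule index_adjoint_block_mat_mult) (use ab xy carrier in \<open>auto simp: Ds_def three\<close>)
  also have "(\<Sum>q < 3. (Cs ! a ! q * mat_adjoint (Cs ! b ! q)) $$ (x, y))
      + (\<Sum>q < 1. (mat_adjoint (Ds ! q ! a) * Ds ! q ! b) $$ (x, y))
      = [[L, 0\<^sub>m n n, 0\<^sub>m n n], [0\<^sub>m n n, L, 0\<^sub>m n n], [0\<^sub>m n n, 0\<^sub>m n n, L]] ! a ! b $$ (x, y)"
    using ab xy dims commute unfolding three L
    by (auto simp: Cs_def Ds_def numeral_3_eq_3)
  also have "\<dots> = block_mat 3 3 n n [[L, 0\<^sub>m n n, 0\<^sub>m n n], [0\<^sub>m n n, L, 0\<^sub>m n n], [0\<^sub>m n n, 0\<^sub>m n n, L]] $$ (a * n + x, b * n + y)"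
    using ab xy by (simp add: index_block_mat)
  finally show "(CURL * mat_adjoint CURL + mat_adjoint DIV * DIV) $$ (a * n + x, b * n + y)
    = block_mat 3 3 n n [[L, 0\<^sub>m n n, 0\<^sub>m n n], [0\<^sub>m n n, L, 0\<^sub>m n n], [0\<^sub>m n n, 0\<^sub>m n n, L]] $$ (a * n + x, b * n + y)" .
qed (simp_all add: CURL_def DIV_def)

theorem corollary4p8:
  fixes N k :: nat and h a1 a2 a3 :: real
  assumes "k \<in> {1, 2, 3, 4}" and "N \<ge> 2 * k" and "h > 0"
  defines "M \<equiv> N ^ 3"
  defines "D \<equiv> Dop N k h a1 a2 a3"
  defines "CURL \<equiv> block_mat 3 3 M M
             [[0\<^sub>m M M, - D 3, D 2],
              [D 3, 0\<^sub>m M M, - D 1],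
              [- D 2, D 1, 0\<^sub>m M M]]"
  defines "DIV \<equiv> block_mat 1 3 M M [[D 1, D 2, D 3]]"
  defines "L \<equiv> DIV * mat_adjoint DIV"
  shows "CURL * mat_adjoint CURL + mat_adjoint DIV * DIV
         = block_mat 3 3 M M [[L, 0\<^sub>m M M, 0\<^sub>m M M], [0\<^sub>m M M, L, 0\<^sub>m M M], [0\<^sub>m M M, 0\<^sub>m M M, L]]"
proof -
  have carrier: "D i \<in> carrier_mat M M" if "i \<in> {1, 2, 3}" for i
    unfolding D_def M_def using that by (rule Dop_carrier)
  have commute: "mat_adjoint X * Y = Y * mat_adjoint X" if "X \<in> {D 1, D 2, D 3}" "Y \<in> {D 1, D 2, D 3}" for X Y
    using that unfolding D_def by (auto simp: Dop_adjoint_commute)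
  show ?thesis
    unfolding CURL_def DIV_def L_def
    by (rule curl_curl_adjoint_plus_div_adjoint_div) (use carrier commute in auto)
qed

end
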